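(* Let $G$ be the graph constructed as follows. Take three vertex-disjoint copies $H_1,H_2,H_3$ of $K_2\vee\overline{K_2}$ ($K_4$ minus an edge). In each $H_i$ choose a vertex $v_i$ of degree $2$. Add a new vertex $u$ adjacent to $v_1,v_2,v_3$. Then $G$ is a graph with $\Delta(G)=3$ containing no odd cycle of length greater than $3$, and $G$ is not $3$-edge-orientable.
   Context: $G_1\vee G_2$ denotes the join: the disjoint union of $G_1$ and $G_2$ plus all edges between them. An orientation of a graph is any digraph obtained by replacing each edge $xy$ with the arc $(x,y)$, with the arc $(y,x)$, or with both arcs. A kernel of a digraph $D$ is an independent set $S$ such that every vertex of $D-S$ has an out-neighbor in $S$. $D$ is kernel-perfect if every induced subdigraph of $D$ has a kernel. A graph $G$ is $k$-edge-orientable if its line graph $L(G)$ admits a kernel-perfect orientation in which every vertex has out-degree at most $k-1$. *)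

theory Defs
  imports Main
begin

text \<open>Simple graphs are given by a vertex set V and an edge set E of 2-element sets.\<close>

definition vdegree :: "'a set set \<Rightarrow> 'a \<Rightarrow> nat" where
  "vdegree E v = card {e \<in> E. v \<in> e}"

definition max_degree :: "'a set \<Rightarrow> 'a set set \<Rightarrow> nat" where
  "max_degree V E = Max (vdegree E ` V)"

definition is_cycle :: "'a set set \<Rightarrow> 'a list \<Rightarrow> bool" where
  "is_cycle E vs \<longleftrightarrow> length vs \<ge> 3 \<and> distinct vs \<and>
     (\<forall>i < length vs. {vs ! i, vs ! ((i + 1) mod length vs)} \<in> E)"

definition line_adj :: "'a set set \<Rightarrow> 'a set \<Rightarrow> 'a set \<Rightarrow> bool" where
  "line_adj E e f \<longleftrightarrow> e \<in> E \<and> f \<in> E \<and> e \<noteq> f \<and> e \<inter> f \<noteq> {}"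

definition is_orientation :: "('v \<Rightarrow> 'v \<Rightarrow> bool) \<Rightarrow> ('v \<times> 'v) set \<Rightarrow> bool" where
  "is_orientation adj A \<longleftrightarrow> A \<subseteq> {(x, y). adj x y} \<and>
     (\<forall>x y. adj x y \<longrightarrow> (x, y) \<in> A \<or> (y, x) \<in> A)"

definition is_kernel :: "'v set \<Rightarrow> ('v \<times> 'v) set \<Rightarrow> 'v set \<Rightarrow> bool" where
  "is_kernel W A S \<longleftrightarrow> S \<subseteq> W \<and> (\<forall>x\<in>S. \<forall>y\<in>S. (x, y) \<notin> A) \<and>
     (\<forall>x \<in> W - S. \<exists>y \<in> S. (x, y) \<in> A)"

definition kernel_perfect :: "'v set \<Rightarrow> ('v \<times> 'v) set \<Rightarrow> bool" where
  "kernel_perfect V A \<longleftrightarrow> (\<forall>W \<subseteq> V. \<exists>S. is_kernel W A S)"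

definition edge_orientable :: "'a set set \<Rightarrow> nat \<Rightarrow> bool" where
  "edge_orientable E k \<longleftrightarrow> (\<exists>A. is_orientation (line_adj E) A \<and> kernel_perfect E A \<and>
     (\<forall>e \<in> E. card {f. (e, f) \<in> A} \<le> k - 1))"

text \<open>The graph G: copy i (i = 0,1,2) of K4 minus an edge has vertices 4i, 4i+1 (the K2)
  and 4i+2, 4i+3 (the complement of K2); v_i = 4i+2 has degree 2; u = 12.\<close>
definition G_verts :: "nat set" where
  "G_verts = {0..12}"

definition G_edges :: "nat set set" where
  "G_edges = (\<Union>i \<in> {0, 1, 2::nat}.
     {{4*i, 4*i+1}, {4*i, 4*i+2}, {4*i, 4*i+3}, {4*i+1, 4*i+2}, {4*i+1, 4*i+3}, {12, 4*i+2}})"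

end

theory Submission
  imports Defs
begin

(*
  Cycles: an edge avoiding u joins two vertices of the same diamond, so a cycle avoiding u lies in
  one diamond and has at most 4 vertices.  On a cycle through u, the two neighbours of u are joined
  by a path avoiding u, hence lie in the same diamond; as each diamond contains only one neighbour
  of u they coincide, so in fact no cycle passes through u.

  Orientability: in a kernel-perfect digraph a kernel of a triangle is a single vertex, which
  therefore absorbs the other two.  Suppose L(G) had a kernel-perfect orientation with out-degrees
  at most 2.  In every diamond the pendant edge u v_i must then have an out-arc into the diamond.
  The three pendant edges form a triangle of L(G); one of them absorbs the other two, and of those
  two, one points to the other.  That edge has two out-arcs inside the triangle and one into its
  diamond, i.e. out-degree 3.
*)

definition absorbs :: "('v \<times> 'v) set \<Rightarrow> 'v \<Rightarrow> 'v \<Rightarrow> 'v \<Rightarrow> bool" where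
  "absorbs A x y z \<longleftrightarrow> (y, x) \<in> A \<and> (z, x) \<in> A"

lemma kernel_perfect_triangle_absorbs:
  assumes "kernel_perfect V A" and "{x, y, z} \<subseteq> V"
    and "(x, y) \<in> A \<or> (y, x) \<in> A" "(x, z) \<in> A \<or> (z, x) \<in> A" "(y, z) \<in> A \<or> (z, y) \<in> A"
  shows "absorbs A x y z \<or> absorbs A y x z \<or> absorbs A z x y"
proof -
  obtain S where S: "is_kernel {x, y, z} A S"
    using assms(1,2) unfolding kernel_perfect_def by blast
  then have indep: "\<And>a b. a \<in> S \<Longrightarrow> b \<in> S \<Longrightarrow> (a, b) \<notin> A"
    and absorbing: "\<And>a. a \<in> {x, y, z} - S \<Longrightarrow> \<exists>b\<in>S. (a, b) \<in> A"
    unfolding is_kernel_def by blast+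
  obtain s where s: "s \<in> S" "s \<in> {x, y, z}"
    using S absorbing unfolding is_kernel_def by blast
  have "S = {s}"
    using S s indep assms(3-5) unfolding is_kernel_def by blast
  then have "\<And>a. a \<in> {x, y, z} \<Longrightarrow> a \<noteq> s \<Longrightarrow> (a, s) \<in> A"
    using absorbing by blast
  then show ?thesis
    using s \<open>S = {s}\<close> indep assms(3-5) unfolding absorbs_def by blast
qed

(* {x, y} is the K2 of the diamond, v and w are its two degree-2 vertices,
   and u v is the pendant edge. *)
definition diamond_with_pendant :: "'a set set \<Rightarrow> 'a \<Rightarrow> 'a \<Rightarrow> 'a \<Rightarrow> 'a \<Rightarrow> 'a \<Rightarrow> bool" where
  "diamond_with_pendant E x y v w u \<longleftrightarrow> distinct [x, y, v, w, u] \<and>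
     {{x, y}, {x, v}, {x, w}, {y, v}, {y, w}, {u, v}} \<subseteq> E"

lemma diamond_with_pendant_swap:
  "diamond_with_pendant E x y v w u \<Longrightarrow> diamond_with_pendant E y x v w u"
  unfolding diamond_with_pendant_def by (auto simp: insert_commute)

locale three_edge_orientation =
  fixes E :: "'a set set" and A :: "('a set \<times> 'a set) set"
  assumes finite_edges: "finite E"
    and orientation: "is_orientation (line_adj E) A"
    and kernel_perfect: "kernel_perfect E A"
    and out_degree: "\<And>e. e \<in> E \<Longrightarrow> card {f. (e, f) \<in> A} \<le> 2"
begin

lemma arc_or_reverse:
  "e \<in> E \<Longrightarrow> f \<in> E \<Longrightarrow> e \<noteq> f \<Longrightarrow> e \<inter> f \<noteq> {} \<Longrightarrow> (e, f) \<in> A \<or> (f, e) \<in> A"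
  using orientation unfolding is_orientation_def line_adj_def by blast

lemma no_three_out_arcs:
  assumes "(e, f\<^sub>1) \<in> A" "(e, f\<^sub>2) \<in> A" "(e, f\<^sub>3) \<in> A"
    and "f\<^sub>1 \<noteq> f\<^sub>2" "f\<^sub>1 \<noteq> f\<^sub>3" "f\<^sub>2 \<noteq> f\<^sub>3"
  shows False
proof -
  have out_nbrs: "{f. (e, f) \<in> A} \<subseteq> E" and "e \<in> E"
    using orientation assms(1) unfolding is_orientation_def line_adj_def by auto
  have "card {f\<^sub>1, f\<^sub>2, f\<^sub>3} \<le> card {f. (e, f) \<in> A}"
    using assms finite_subset[OF out_nbrs finite_edges] by (intro card_mono) auto
  then show False
    using out_degree[OF \<open>e \<in> E\<close>] assms(4-6) by simp
qed

lemma triangle_absorbs: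
  assumes "{e, f, g} \<subseteq> E" "e \<inter> f \<noteq> {}" "e \<inter> g \<noteq> {}" "f \<inter> g \<noteq> {}"
    and "e \<noteq> f" "e \<noteq> g" "f \<noteq> g"
  shows "absorbs A e f g \<or> absorbs A f e g \<or> absorbs A g e f"
  using assms arc_or_reverse by (intro kernel_perfect_triangle_absorbs[OF kernel_perfect]) auto

lemma forced_in_arc:
  assumes "(e, f\<^sub>1) \<in> A" "(e, f\<^sub>2) \<in> A" "f\<^sub>1 \<noteq> f\<^sub>2" "f \<noteq> f\<^sub>1" "f \<noteq> f\<^sub>2"
    and "f \<in> E" "e \<noteq> f" "e \<inter> f \<noteq> {}"
  shows "(f, e) \<in> A"
proof -
  have "e \<in> E"
    using orientation assms(1) unfolding is_orientation_def line_adj_def by auto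
  then show ?thesis
    using arc_or_reverse[of e f] no_three_out_arcs[of e f\<^sub>1 f\<^sub>2 f] assms by blast
qed

(* Once an edge has two out-arcs, each further neighbour must point to it; chasing these forced arcs
   around the diamond makes the triangle at x cyclic, so it has no absorbing vertex. *)
lemma diamond_side_not_absorbing:
  assumes D: "diamond_with_pendant E x y v w u"
    and absorbs: "absorbs A {x, v} {x, y} {y, v}"
    and pendant_in: "({x, v}, {u, v}) \<in> A" "({y, v}, {u, v}) \<in> A"
  shows False
proof -
  have ne: "x \<noteq> y" "x \<noteq> v" "x \<noteq> w" "x \<noteq> u" "y \<noteq> v" "y \<noteq> w" "y \<noteq> u"
      "v \<noteq> w" "v \<noteq> u" "w \<noteq> u"
    and edges: "{x, y} \<in> E" "{x, v} \<in> E" "{x, w} \<in> E" "{y, v} \<in> E" "{y, w} \<in> E"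
    using D unfolding diamond_with_pendant_def by auto
  note simps = ne ne[THEN not_sym] edges doubleton_eq_iff
  from absorbs have xy_xv: "({x, y}, {x, v}) \<in> A" and yv_xv: "({y, v}, {x, v}) \<in> A"
    unfolding absorbs_def by auto
  have xy_yv: "({x, y}, {y, v}) \<in> A" and yw_yv: "({y, w}, {y, v}) \<in> A"
    by (auto intro!: forced_in_arc[OF yv_xv pendant_in(2)] simp: simps)
  have xw_xy: "({x, w}, {x, y}) \<in> A" and yw_xy: "({y, w}, {x, y}) \<in> A"
    by (auto intro!: forced_in_arc[OF xy_xv xy_yv] simp: simps)
  have xw_yw: "({x, w}, {y, w}) \<in> A"
    by (auto intro!: forced_in_arc[OF yw_yv yw_xy] simp: simps)
  have xv_xw: "({x, v}, {x, w}) \<in> A"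
    by (auto intro!: forced_in_arc[OF xw_xy xw_yw] simp: simps)
  have "({x, v}, {x, y}) \<notin> A"
    using no_three_out_arcs[OF pendant_in(1) xv_xw, of "{x, y}"] by (auto simp: simps)
  moreover have "({x, w}, {x, v}) \<notin> A"
    using no_three_out_arcs[OF xw_xy xw_yw, of "{x, v}"] by (auto simp: simps)
  moreover have "({x, y}, {x, w}) \<notin> A"
    using no_three_out_arcs[OF xy_xv xy_yv, of "{x, w}"] by (auto simp: simps)
  moreover have "absorbs A {x, y} {x, v} {x, w} \<or> absorbs A {x, v} {x, y} {x, w} \<or>
      absorbs A {x, w} {x, y} {x, v}"
    by (rule triangle_absorbs) (auto simp: simps)
  ultimately show False
    unfolding absorbs_def by blast
qed

lemma diamond_pendant_out_arc:
  assumes D: "diamond_with_pendant E x y v w u"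
  shows "\<exists>f\<in>E. u \<notin> f \<and> ({u, v}, f) \<in> A"
proof -
  have ne: "x \<noteq> y" "x \<noteq> v" "x \<noteq> u" "y \<noteq> v" "y \<noteq> u" "v \<noteq> u"
    and edges: "{x, y} \<in> E" "{x, v} \<in> E" "{y, v} \<in> E" "{u, v} \<in> E"
    using D unfolding diamond_with_pendant_def by auto
  note simps = ne ne[THEN not_sym] edges doubleton_eq_iff
  have "({u, v}, {x, v}) \<in> A \<or> ({u, v}, {y, v}) \<in> A"
  proof (rule ccontr)
    assume "\<not> ?thesis"
    then have pendant_in: "({x, v}, {u, v}) \<in> A" "({y, v}, {u, v}) \<in> A"
      using arc_or_reverse[of "{u, v}" "{x, v}"] arc_or_reverse[of "{u, v}" "{y, v}"]
      by (auto simp: simps)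
    have "absorbs A {x, y} {x, v} {y, v} \<or> absorbs A {x, v} {x, y} {y, v} \<or>
        absorbs A {y, v} {x, y} {x, v}"
      by (rule triangle_absorbs) (auto simp: simps)
    then consider "absorbs A {x, y} {x, v} {y, v}" | "absorbs A {x, v} {x, y} {y, v}"
      | "absorbs A {y, v} {x, y} {x, v}"
      by blast
    then show False
    proof cases
      case 1
      then have "({x, v}, {x, y}) \<in> A" "({y, v}, {x, y}) \<in> A"
        unfolding absorbs_def by auto
      moreover have "({x, v}, {y, v}) \<in> A \<or> ({y, v}, {x, v}) \<in> A"
        by (rule arc_or_reverse) (auto simp: simps)
      ultimately show False
        using no_three_out_arcs[OF pendant_in(1), of "{x, y}" "{y, v}"]
          no_three_out_arcs[OF pendant_in(2), of "{x, y}" "{x, v}"] by (auto simp: simps)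
    next
      case 2
      show False
        using diamond_side_not_absorbing[OF D 2 pendant_in] .
    next
      case 3
      show False
        using diamond_side_not_absorbing[OF diamond_with_pendant_swap[OF D]
            3[unfolded insert_commute[of x y]] pendant_in(2,1)] .
    qed
  qed
  then show ?thesis
    using edges ne by (metis insertE singletonD)
qed

lemma absorbed_pair_member_without_exit:
  assumes "absorbs A a b c" "b \<in> E" "c \<in> E" "b \<inter> c \<noteq> {}"
    and "a \<noteq> b" "a \<noteq> c" "b \<noteq> c"
  shows "(\<forall>k. (b, k) \<in> A \<longrightarrow> k \<in> {a, b, c}) \<or> (\<forall>k. (c, k) \<in> A \<longrightarrow> k \<in> {a, b, c})"
proof -
  have ba: "(b, a) \<in> A" and ca: "(c, a) \<in> A"
    using assms(1) unfolding absorbs_def by auto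
  have "(b, c) \<in> A \<or> (c, b) \<in> A"
    using assms(2,3,7,4) by (rule arc_or_reverse)
  then show ?thesis
  proof
    assume "(b, c) \<in> A"
    then have "(b, k) \<notin> A" if "k \<notin> {a, b, c}" for k
      using no_three_out_arcs[OF ba \<open>(b, c) \<in> A\<close>, of k] assms(6) that by auto
    then show ?thesis
      by blast
  next
    assume "(c, b) \<in> A"
    then have "(c, k) \<notin> A" if "k \<notin> {a, b, c}" for k
      using no_three_out_arcs[OF ca \<open>(c, b) \<in> A\<close>, of k] assms(5) that by auto
    then show ?thesis
      by blast
  qed
qed

lemma triangle_member_without_exit:
  assumes "{e, f, g} \<subseteq> E" "e \<inter> f \<noteq> {}" "e \<inter> g \<noteq> {}" "f \<inter> g \<noteq> {}"
    and "e \<noteq> f" "e \<noteq> g" "f \<noteq> g"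
  shows "\<exists>h\<in>{e, f, g}. \<forall>k. (h, k) \<in> A \<longrightarrow> k \<in> {e, f, g}"
proof -
  have in_E: "e \<in> E" "f \<in> E" "g \<in> E"
    using assms(1) by auto
  consider "absorbs A e f g" | "absorbs A f e g" | "absorbs A g e f"
    using triangle_absorbs[OF assms] by blast
  then show ?thesis
  proof cases
    case 1
    from absorbed_pair_member_without_exit[OF 1 in_E(2,3) assms(4,5,6,7)] show ?thesis
      by blast
  next
    case 2
    from absorbed_pair_member_without_exit[OF 2 in_E(1,3) assms(3) assms(5)[symmetric] assms(7,6)]
    show ?thesis
      by blast
  next
    case 3
    from absorbed_pair_member_without_exit[OF 3 in_E(1,2) assms(2)
        assms(6)[symmetric] assms(7)[symmetric] assms(5)]
    show ?thesis
      by blast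
  qed
qed

end

lemma is_cycle_rotate:
  assumes "is_cycle E vs"
  shows "is_cycle E (rotate k vs)"
  unfolding is_cycle_def
proof (intro conjI allI impI)
  let ?n = "length vs"
  show "length (rotate k vs) \<ge> 3" "distinct (rotate k vs)"
    using assms unfolding is_cycle_def by simp_all
  fix i
  assume "i < length (rotate k vs)"
  then have i: "i < ?n" by simp
  have "(k + i) mod ?n < ?n" "(i + 1) mod ?n < ?n"
    using i by (intro mod_less_divisor; auto)+
  then have "{vs ! ((k + i) mod ?n), vs ! (((k + i) mod ?n + 1) mod ?n)} \<in> E"
    using assms unfolding is_cycle_def by blast
  moreover have "((k + i) mod ?n + 1) mod ?n = (k + (i + 1) mod ?n) mod ?n"
    by (simp add: mod_add_right_eq mod_Suc_eq)
  ultimately show "{rotate k vs ! i, rotate k vs ! ((i + 1) mod length (rotate k vs))} \<in> E"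
    using i \<open>(i + 1) mod ?n < ?n\<close> by (simp add: nth_rotate)
qed

definition G_edge_list :: "nat set list" where
  "G_edge_list =
    [{8, 9}, {8, 10}, {8, 11}, {9, 10}, {9, 11}, {12, 10},
     {4, 5}, {4, 6}, {4, 7}, {5, 6}, {5, 7}, {12, 6},
     {0, 1}, {0, 2}, {0, 3}, {1, 2}, {1, 3}, {12, 2}]"

lemma set_G_edge_list: "set G_edge_list = G_edges"
  unfolding G_edges_def G_edge_list_def by (simp add: numeral_2_eq_2)

lemma G_vdegree_eq: "vdegree G_edges v = card (set (filter (\<lambda>e. v \<in> e) G_edge_list))"
  unfolding vdegree_def set_G_edge_list[symmetric] by (metis set_filter)

lemma G_vdegree_le_3:
  assumes "v \<in> G_verts"
  shows "vdegree G_edges v \<le> 3"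
proof -
  have "vdegree G_edges v \<le> length (filter (\<lambda>e. v \<in> e) G_edge_list)"
    unfolding G_vdegree_eq by (rule card_length)
  also have "\<dots> \<le> 3"
    using assms unfolding G_verts_def G_edge_list_def atLeastAtMost_upt
    by (simp del: upt_Suc add: upt_rec)
  finally show ?thesis .
qed

lemma G_max_degree: "max_degree G_verts G_edges = 3"
  unfolding max_degree_def
proof (rule Max_eqI)
  show "finite (vdegree G_edges ` G_verts)"
    by (simp add: G_verts_def)
  show "d \<le> 3" if "d \<in> vdegree G_edges ` G_verts" for d
    using that G_vdegree_le_3 by blast
  have "vdegree G_edges 0 = 3"
    unfolding G_vdegree_eq G_edge_list_def by (simp add: doubleton_eq_iff)
  then show "3 \<in> vdegree G_edges ` G_verts"
    unfolding G_verts_def by force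
qed

lemma G_edge_within_diamond:
  "{a, b} \<in> G_edges \<Longrightarrow> a \<noteq> 12 \<Longrightarrow> b \<noteq> 12 \<Longrightarrow> a div 4 = b div 4"
  unfolding set_G_edge_list[symmetric] G_edge_list_def by (auto simp: doubleton_eq_iff)

lemma G_hub_neighbour: "{a, 12} \<in> G_edges \<Longrightarrow> a \<in> {2, 6, 10}"
  unfolding set_G_edge_list[symmetric] G_edge_list_def by (auto simp: doubleton_eq_iff)

lemma G_path_within_diamond:
  assumes "\<And>j. j < m \<Longrightarrow> {p j, p (Suc j)} \<in> G_edges" and "\<And>j. j \<le> m \<Longrightarrow> p j \<noteq> 12"
    and "k \<le> m"
  shows "p k div 4 = p 0 div 4"
  using assms(3)
proof (induction k)
  case (Suc k)
  have "p k div 4 = p (Suc k) div 4"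
    using G_edge_within_diamond[OF assms(1)] assms(2) Suc.prems by simp
  then show ?case
    using Suc by simp
qed simp

lemma G_cycle_avoids_hub:
  assumes cycle: "is_cycle G_edges vs"
  shows "12 \<notin> set vs"
proof
  define n where "n = length vs"
  have n: "n \<ge> 3"
    using cycle unfolding is_cycle_def n_def by simp
  assume "12 \<in> set vs"
  then obtain i where i: "i < n" "vs ! i = 12"
    unfolding n_def by (metis in_set_conv_nth)
  define ws where "ws = rotate (Suc i) vs"  \<comment> \<open>the same cycle, ending in the hub 12\<close>
  have len: "length ws = n"
    unfolding ws_def n_def by simp
  have "is_cycle G_edges ws"
    unfolding ws_def using cycle by (rule is_cycle_rotate)
  then have ws_distinct: "distinct ws"
    and ws_edge: "\<And>j. j < n \<Longrightarrow> {ws ! j, ws ! ((j + 1) mod n)} \<in> G_edges"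
    unfolding is_cycle_def len by blast+
  have "ws ! (n - 1) = vs ! ((Suc i + (n - 1)) mod n)"
    unfolding ws_def n_def by (rule nth_rotate) (use n n_def in simp)
  also have "(Suc i + (n - 1)) mod n = i"
    using i n by simp
  finally have hub: "ws ! (n - 1) = 12"
    using i by simp
  have not_hub: "ws ! j \<noteq> 12" if "j \<le> n - 2" for j
    using nth_eq_iff_index_eq[OF ws_distinct, of j "n - 1"] hub that n len by auto
  have "ws ! (n - 2) div 4 = ws ! 0 div 4"
  proof (rule G_path_within_diamond[of "n - 2" "(!) ws"])
    show "{ws ! j, ws ! Suc j} \<in> G_edges" if "j < n - 2" for j
      using ws_edge[of j] that by simp
  qed (use not_hub in auto)
  moreover have "ws ! (n - 2) \<in> {2, 6, 10}"
    using ws_edge[of "n - 2"] hub n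
    by (intro G_hub_neighbour) (simp add: Suc_diff_Suc numeral_2_eq_2)
  moreover have "ws ! 0 \<in> {2, 6, 10}"
    using ws_edge[of "n - 1"] hub n by (intro G_hub_neighbour) (simp add: insert_commute)
  ultimately have "ws ! (n - 2) = ws ! 0"
    by auto
  then show False
    using nth_eq_iff_index_eq[OF ws_distinct, of "n - 2" 0] n len by auto
qed

lemma G_cycle_length_le_4:
  assumes cycle: "is_cycle G_edges vs"
  shows "length vs \<le> 4"
proof -
  define n where "n = length vs"
  have edge: "{vs ! j, vs ! ((j + 1) mod n)} \<in> G_edges" if "j < n" for j
    using cycle that unfolding is_cycle_def n_def by blast
  have "vs ! k div 4 = vs ! 0 div 4" if "k < n" for k
  proof (rule G_path_within_diamond[of "n - 1" "(!) vs"])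
    show "{vs ! j, vs ! Suc j} \<in> G_edges" if "j < n - 1" for j
      using edge[of j] that by simp
    show "vs ! j \<noteq> 12" if "j \<le> n - 1" for j
      using G_cycle_avoids_hub[OF cycle] that \<open>k < n\<close> nth_mem[of j vs]
      unfolding n_def by fastforce
    show "k \<le> n - 1"
      using that by simp
  qed
  moreover have "x \<in> {4 * b..<4 * b + 4}" if "x div 4 = b" for x b :: nat
    using that by auto
  ultimately have "set vs \<subseteq> {4 * (vs ! 0 div 4)..<4 * (vs ! 0 div 4) + 4}"
    unfolding n_def by (metis in_set_conv_nth subsetI)
  then have "card (set vs) \<le> 4"
    using card_mono[of "{4 * (vs ! 0 div 4)..<4 * (vs ! 0 div 4) + 4}"] by simp
  then show ?thesis
    using cycle unfolding is_cycle_def by (simp add: distinct_card)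
qed

lemma G_diamond_with_pendant:
  assumes "i < 3"
  shows "diamond_with_pendant G_edges (4 * i) (4 * i + 1) (4 * i + 2) (4 * i + 3) 12"
proof -
  have "i \<in> {0, 1, 2}"
    using assms by auto
  then have "{{4 * i, 4 * i + 1}, {4 * i, 4 * i + 2}, {4 * i, 4 * i + 3}, {4 * i + 1, 4 * i + 2},
      {4 * i + 1, 4 * i + 3}, {12, 4 * i + 2}} \<subseteq> G_edges"
    unfolding G_edges_def by (rule UN_upper)
  moreover have "distinct [4 * i, 4 * i + 1, 4 * i + 2, 4 * i + 3, 12]"
    using assms by simp
  ultimately show ?thesis
    unfolding diamond_with_pendant_def by blast
qed

lemma G_not_3_edge_orientable: "\<not> edge_orientable G_edges 3"
proof
  assume "edge_orientable G_edges 3"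
  then obtain A where "is_orientation (line_adj G_edges) A" "kernel_perfect G_edges A"
    and "\<forall>e\<in>G_edges. card {f. (e, f) \<in> A} \<le> 2"
    unfolding edge_orientable_def by auto
  moreover have "finite G_edges"
    by (simp add: G_edges_def)
  ultimately interpret three_edge_orientation G_edges A
    by unfold_locales auto
  define T :: "nat set set" where "T = {{12, 2}, {12, 6}, {12, 10}}"
  have "\<exists>f\<in>G_edges. 12 \<notin> f \<and> ({12, 4 * i + 2}, f) \<in> A" if "i < 3" for i :: nat
    using diamond_pendant_out_arc[OF G_diamond_with_pendant[OF that]] .
  from this[of 0] this[of 1] this[of 2]
  have exit: "\<forall>h\<in>T. \<exists>f\<in>G_edges. 12 \<notin> f \<and> (h, f) \<in> A"
    unfolding T_def by (simp add: numeral_2_eq_2)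
  have "T \<subseteq> G_edges"
    unfolding T_def set_G_edge_list[symmetric] G_edge_list_def by simp
  then obtain h where "h \<in> T" "\<forall>k. (h, k) \<in> A \<longrightarrow> k \<in> T"
    using triangle_member_without_exit[of "{12, 2}" "{12, 6}" "{12, 10}"]
    unfolding T_def by (simp add: doubleton_eq_iff) blast
  with exit show False
    unfolding T_def by blast
qed

theorem mainTheorem20:
  shows "max_degree G_verts G_edges = 3
    \<and> \<not> (\<exists>vs. is_cycle G_edges vs \<and> odd (length vs) \<and> length vs > 3)
    \<and> \<not> edge_orientable G_edges 3"
proof (intro conjI)
  show "max_degree G_verts G_edges = 3"
    by (rule G_max_degree)
  show "\<not> (\<exists>vs. is_cycle G_edges vs \<and> odd (length vs) \<and> length vs > 3)"
  proof clarify
    fix vs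
    assume "is_cycle G_edges vs" "odd (length vs)" "length vs > 3"
    then have "length vs = 4"
      using G_cycle_length_le_4 by fastforce
    with \<open>odd (length vs)\<close> show False
      by simp
  qed
  show "\<not> edge_orientable G_edges 3"
    by (rule G_not_3_edge_orientable)
qed

end
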